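(* Let $d\in\mathbb{N}$ and let $C(d)$ be a constant such that for every Radon log-concave probability measure $\mu$ on a locally convex space $E$, every $f\in\mathcal{P}^d(\mu)$ and every $\varphi\in C_b^\infty(\mathbb{R})$ with $\|\varphi\|_\infty\le1$ one has $\sigma_f^{1/d}\int\varphi'(f)\,d\mu\le C(d)\|\varphi'\|_\infty^{1-1/d}$. Let $\mu$ be a Radon log-concave probability measure on a locally convex space $E$ and let $f\in\mathcal{P}^d(\mu)$ be not a.e. equal to a constant, and let $\rho_f$ be the density of $\mu\circ f^{-1}$ with respect to Lebesgue measure. Then $\rho_f\in L^p(\mathbb{R})$ whenever $1<p<\frac{d}{d-1}$, and $$\sigma_f^{1-1/p}\|\rho_f\|_{L^p(\mathbb{R})}\le C_1(d,p),\qquad C_1(d,p)=\Bigl(p(p-1)^{-1}+p\Bigl(\frac{d}{d-1}-p\Bigr)^{-1}\Bigr)^{1/p}C(d)^{d(1-1/p)}.$$ (For $d=1$, $\frac{d}{d-1}$ is interpreted as $+\infty$ and the term $p(\frac{d}{d-1}-p)^{-1}$ as $0$.)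
   Context: Log-concave measures on $\mathbb{R}^n$: density $e^{-V}$ w.r.t. Lebesgue measure on an affine subspace, $V$ convex with values in $(-\infty,+\infty]$. A Radon probability measure on a locally convex space $E$ is log-concave if all its images under continuous linear maps to $\mathbb{R}^n$ are log-concave. $\mathcal{P}^d(\mu)$: closure in $L^2(\mu)$ of the functions $p(\ell_1,\dots,\ell_n)$ with $\ell_i\in E^*$ and $p$ a polynomial on $\mathbb{R}^n$ of degree $d$. $\sigma_f^2=\int(f-\int f\,d\mu)^2d\mu$. $C_b^\infty(\mathbb{R})$: bounded smooth functions with bounded derivatives of all orders; $\|\varphi\|_\infty=\sup|\varphi|$. *)

theory Defs
  imports "HOL-Analysis.Analysis" "HOL-Probability.Probability"
begin

class locally_convex_space = real_vector + t2_space +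
  assumes lcs_add_continuous: "\<And>(x::'a) y U. open U \<Longrightarrow> x + y \<in> U \<Longrightarrow>
      \<exists>V W. open V \<and> open W \<and> x \<in> V \<and> y \<in> W \<and> (\<forall>a\<in>V. \<forall>b\<in>W. a + b \<in> U)"
  and lcs_scale_continuous: "\<And>(t::real) (x::'a) U. open U \<Longrightarrow> t *\<^sub>R x \<in> U \<Longrightarrow>
      \<exists>e>0. \<exists>V. open V \<and> x \<in> V \<and> (\<forall>s a. \<bar>s - t\<bar> < e \<and> a \<in> V \<longrightarrow> s *\<^sub>R a \<in> U)"
  and lcs_convex_nhds: "\<And>U. open U \<Longrightarrow> (0::'a) \<in> U \<Longrightarrow> \<exists>V. open V \<and> 0 \<in> V \<and> V \<subseteq> U \<and>
         (\<forall>a\<in>V. \<forall>b\<in>V. \<forall>t::real. 0 \<le> t \<and> t \<le> 1 \<longrightarrow> t *\<^sub>R a + (1 - t) *\<^sub>R b \<in> V)"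

definition dual_space :: "('a::locally_convex_space \<Rightarrow> real) set" where
  "dual_space = {l. linear l \<and> continuous_on UNIV l}"

definition radon_measure :: "'a::topological_space measure \<Rightarrow> bool" where
  "radon_measure M \<longleftrightarrow> sets M = sets borel \<and>
     (\<forall>A\<in>sets M. emeasure M A = (SUP K\<in>{K. compact K \<and> K \<subseteq> A}. emeasure M K))"

text \<open>R^n represented as extensional functions on {..<n}, with Lebesgue measure.\<close>
definition lebesgue_fd :: "nat \<Rightarrow> (nat \<Rightarrow> real) measure" where
  "lebesgue_fd n = PiM {..<n} (\<lambda>_. lborel)"

definition convex_ereal_fd :: "nat \<Rightarrow> ((nat \<Rightarrow> real) \<Rightarrow> ereal) \<Rightarrow> bool" where
  "convex_ereal_fd k V \<longleftrightarrow> (\<forall>x. V x \<noteq> -\<infinity>) \<and>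
     (\<forall>x\<in>space (lebesgue_fd k). \<forall>y\<in>space (lebesgue_fd k). \<forall>t::real. 0 \<le> t \<and> t \<le> 1 \<longrightarrow>
        V (\<lambda>i\<in>{..<k}. t * x i + (1 - t) * y i) \<le> ereal t * V x + ereal (1 - t) * V y)"

text \<open>Log-concave measures on R^n: density e^{-V} (V convex with values in (-inf,+inf])
  w.r.t. Lebesgue measure on an affine subspace, the latter being the image of Lebesgue
  measure on R^k under an injective affine map (normalisation absorbed in V).\<close>
definition log_concave_fd :: "nat \<Rightarrow> (nat \<Rightarrow> real) measure \<Rightarrow> bool" where
  "log_concave_fd n \<mu> \<longleftrightarrow>
     (\<exists>k (a::nat \<Rightarrow> real) (A::nat \<Rightarrow> nat \<Rightarrow> real) V.
        k \<le> n \<and> convex_ereal_fd k V \<and>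
        inj_on (\<lambda>x. \<lambda>i\<in>{..<n}. a i + (\<Sum>j<k. A i j * x j)) (space (lebesgue_fd k)) \<and>
        \<mu> = distr (density (lebesgue_fd k)
                      (\<lambda>x. if V x = \<infinity> then 0 else ennreal (exp (- real_of_ereal (V x)))))
                   (lebesgue_fd n) (\<lambda>x. \<lambda>i\<in>{..<n}. a i + (\<Sum>j<k. A i j * x j)))"

definition log_concave :: "'a::locally_convex_space measure \<Rightarrow> bool" where
  "log_concave M \<longleftrightarrow>
     (\<forall>n (l::nat \<Rightarrow> 'a \<Rightarrow> real). (\<forall>i<n. l i \<in> dual_space) \<longrightarrow>
        log_concave_fd n (distr M (lebesgue_fd n) (\<lambda>x. \<lambda>i\<in>{..<n}. l i x)))"

definition poly_functions :: "nat \<Rightarrow> ('a::locally_convex_space \<Rightarrow> real) set" where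
  "poly_functions d = {g. \<exists>n (l::nat \<Rightarrow> 'a \<Rightarrow> real) (S::(nat \<Rightarrow> nat) set) c.
      (\<forall>i<n. l i \<in> dual_space) \<and> finite S \<and> (\<forall>\<alpha>\<in>S. (\<Sum>i<n. \<alpha> i) \<le> d) \<and>
      g = (\<lambda>x. \<Sum>\<alpha>\<in>S. c \<alpha> * (\<Prod>i<n. (l i x) ^ (\<alpha> i)))}"

definition Pd :: "'a::locally_convex_space measure \<Rightarrow> nat \<Rightarrow> ('a \<Rightarrow> real) set" where
  "Pd M d = {f. f \<in> borel_measurable M \<and> integrable M (\<lambda>x. (f x)\<^sup>2) \<and>
      (\<exists>g::nat \<Rightarrow> 'a \<Rightarrow> real. (\<forall>k. g k \<in> poly_functions d) \<and>
         (\<forall>k. integrable M (\<lambda>x. (f x - g k x)\<^sup>2)) \<and>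
         (\<lambda>k. \<integral>x. (f x - g k x)\<^sup>2 \<partial>M) \<longlonglongrightarrow> 0)}"

definition sigma_f :: "'a measure \<Rightarrow> ('a \<Rightarrow> real) \<Rightarrow> real" where
  "sigma_f M f = sqrt (\<integral>x. (f x - (\<integral>y. f y \<partial>M))\<^sup>2 \<partial>M)"

definition Cb_inf :: "(real \<Rightarrow> real) \<Rightarrow> bool" where
  "Cb_inf \<phi> \<longleftrightarrow> (\<forall>k. (\<forall>x. ((deriv ^^ k) \<phi>) differentiable (at x)) \<and> bounded (range ((deriv ^^ k) \<phi>)))"

definition sup_norm :: "(real \<Rightarrow> real) \<Rightarrow> real" where
  "sup_norm \<phi> = (SUP x. \<bar>\<phi> x\<bar>)"

end

theory Submission
  imports Defs "HOL-Computational_Algebra.Polynomial"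
begin

text \<open>Testing the hypothesis on smoothed ramps, whose derivatives approximate \<open>2 / L\<close> times the
  indicator of a finite disjoint union \<open>U\<close> of open intervals of total length \<open>L\<close>, shows that
  the law of \<open>f\<close> gives \<open>U\<close> mass at most \<open>A L\<^bsup>1/d\<^esup>\<close> with \<open>A = C / (2 \<sigma>\<^sub>f)\<^bsup>1/d\<^esup>\<close>.
  By outer regularity of Lebesgue measure the same holds for every Borel set of finite measure,
  in particular for the level sets of \<open>\<rho>\<close>, which therefore satisfy
  \<open>t |{\<rho> \<ge> t}| \<le> min 1 (A |{\<rho> \<ge> t}|\<^bsup>1/d\<^esup>)\<close>. Inserting both bounds into the layer-cake
  formula for \<open>\<integral> \<rho>\<^sup>p\<close> gives the estimate.\<close>

section \<open>Smooth bounded test functions\<close>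

text \<open>Closed under differentiation because \<open>tanh' = 1 - tanh\<^sup>2\<close>, so a bounded function whose
  derivative lies in this class is in \<open>C\<^sub>b\<^sup>\<infinity>\<close>.\<close>

inductive tanh_poly_sum :: "(real \<Rightarrow> real) \<Rightarrow> bool" where
  tanh_poly_sum_poly: "tanh_poly_sum (\<lambda>x. poly P (tanh (a * x + b)))"
| tanh_poly_sum_zero: "tanh_poly_sum (\<lambda>x. 0)"
| tanh_poly_sum_add: "tanh_poly_sum g \<Longrightarrow> tanh_poly_sum h \<Longrightarrow> tanh_poly_sum (\<lambda>x. g x + h x)"

lemma abs_poly_le_sum_abs_coeff:
  fixes P :: "real poly"
  assumes "\<bar>t\<bar> \<le> 1"
  shows "\<bar>poly P t\<bar> \<le> (\<Sum>i\<le>degree P. \<bar>coeff P i\<bar>)"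
proof -
  have "\<bar>poly P t\<bar> = \<bar>\<Sum>i\<le>degree P. coeff P i * t ^ i\<bar>" by (simp add: poly_altdef)
  also have "\<dots> \<le> (\<Sum>i\<le>degree P. \<bar>coeff P i * t ^ i\<bar>)" by (rule sum_abs)
  also have "\<dots> \<le> (\<Sum>i\<le>degree P. \<bar>coeff P i\<bar>)"
  proof (rule sum_mono)
    fix i
    have "\<bar>t ^ i\<bar> \<le> 1" using assms by (simp add: power_abs power_le_one)
    then show "\<bar>coeff P i * t ^ i\<bar> \<le> \<bar>coeff P i\<bar>" by (simp add: abs_mult mult_left_le)
  qed
  finally show ?thesis .
qed

lemma tanh_poly_sum_bounded: "tanh_poly_sum g \<Longrightarrow> \<exists>B. \<forall>x. \<bar>g x\<bar> \<le> B"
proof (induction rule: tanh_poly_sum.induct)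
  case (tanh_poly_sum_poly P a b)
  have "\<bar>poly P (tanh (a * x + b))\<bar> \<le> (\<Sum>i\<le>degree P. \<bar>coeff P i\<bar>)" for x
    using tanh_real_bounds[of "a * x + b"] by (intro abs_poly_le_sum_abs_coeff) auto
  then show ?case by blast
next
  case (tanh_poly_sum_add g h)
  then obtain B1 B2 where "\<forall>x. \<bar>g x\<bar> \<le> B1" "\<forall>x. \<bar>h x\<bar> \<le> B2" by auto
  then have "\<bar>g x + h x\<bar> \<le> B1 + B2" for x by (meson abs_triangle_ineq add_mono order_trans)
  then show ?case by blast
qed auto

lemma tanh_poly_sum_has_real_derivative:
  "tanh_poly_sum g \<Longrightarrow> \<exists>g'. (\<forall>x. (g has_real_derivative g' x) (at x)) \<and> tanh_poly_sum g'"
proof (induction rule: tanh_poly_sum.induct)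
  case (tanh_poly_sum_poly P a b)
  define Q where "Q = smult a (pderiv P * [:1, 0, -1:])"
  have "((\<lambda>x. poly P (tanh (a * x + b))) has_real_derivative poly Q (tanh (a * x + b))) (at x)" for x
  proof -
    have "((\<lambda>x. poly P (tanh (a * x + b))) has_real_derivative
          poly (pderiv P) (tanh (a * x + b)) * ((1 - tanh (a * x + b) ^ 2) * (a * 1 + 0))) (at x)"
      by (rule DERIV_chain2[OF poly_DERIV]) (auto intro!: derivative_eq_intros)
    then show ?thesis by (simp add: Q_def power2_eq_square algebra_simps)
  qed
  then show ?case
    by (intro exI[of _ "\<lambda>x. poly Q (tanh (a * x + b))"]) (auto intro: tanh_poly_sum.intros)
next
  case tanh_poly_sum_zero
  show ?case by (auto intro!: exI[of _ "\<lambda>x. 0"] tanh_poly_sum.intros)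
next
  case (tanh_poly_sum_add g h)
  then obtain g' h' where "\<forall>x. (g has_real_derivative g' x) (at x)" "tanh_poly_sum g'"
    "\<forall>x. (h has_real_derivative h' x) (at x)" "tanh_poly_sum h'" by auto
  then show ?case
    by (intro exI[of _ "\<lambda>x. g' x + h' x"]) (auto intro!: derivative_eq_intros tanh_poly_sum.intros)
qed

lemma tanh_poly_sum_differentiable: "tanh_poly_sum g \<Longrightarrow> g differentiable (at x)"
  using tanh_poly_sum_has_real_derivative real_differentiable_def by blast

lemma tanh_poly_sum_deriv: "tanh_poly_sum g \<Longrightarrow> tanh_poly_sum (deriv g)"
  by (metis DERIV_imp_deriv ext tanh_poly_sum_has_real_derivative)

lemma tanh_poly_sum_higher_deriv: "tanh_poly_sum g \<Longrightarrow> tanh_poly_sum ((deriv ^^ k) g)"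
  by (induction k) (auto intro: tanh_poly_sum_deriv)

lemma tanh_poly_sum_cmult: "tanh_poly_sum g \<Longrightarrow> tanh_poly_sum (\<lambda>x. c * g x)"
proof (induction rule: tanh_poly_sum.induct)
  case (tanh_poly_sum_poly P a b)
  show ?case using tanh_poly_sum.tanh_poly_sum_poly[of "smult c P" a b] by simp
qed (auto simp: distrib_left intro: tanh_poly_sum.intros)

lemma tanh_poly_sum_sum:
  "finite I \<Longrightarrow> (\<And>i. i \<in> I \<Longrightarrow> tanh_poly_sum (g i)) \<Longrightarrow> tanh_poly_sum (\<lambda>x. \<Sum>i\<in>I. g i x)"
  by (induction I rule: finite_induct) (auto intro: tanh_poly_sum.intros)

lemma tanh_poly_sum_tanh: "tanh_poly_sum (\<lambda>x. tanh (a * x + b))"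
  using tanh_poly_sum.tanh_poly_sum_poly[of "[:0, 1:]" a b] by simp

lemma Cb_inf_if_deriv_tanh_poly_sum:
  assumes "\<And>x. \<phi> differentiable (at x)" "bounded (range \<phi>)" "tanh_poly_sum (deriv \<phi>)"
  shows "Cb_inf \<phi>"
  unfolding Cb_inf_def
proof
  fix k
  show "(\<forall>x. (deriv ^^ k) \<phi> differentiable at x) \<and> bounded (range ((deriv ^^ k) \<phi>))"
  proof (cases k)
    case 0
    then show ?thesis using assms by simp
  next
    case (Suc m)
    then have "tanh_poly_sum ((deriv ^^ k) \<phi>)"
      using tanh_poly_sum_higher_deriv[OF assms(3), of m] by (simp only: funpow_Suc_right comp_def)
    moreover from this obtain B where "\<forall>x. \<bar>(deriv ^^ k) \<phi> x\<bar> \<le> B"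
      using tanh_poly_sum_bounded by blast
    ultimately show ?thesis
      using tanh_poly_sum_differentiable unfolding bounded_real by blast
  qed
qed

section \<open>Smoothed ramps over finite unions of intervals\<close>

text \<open>Normalised by the total length \<open>L\<close> of the intervals, the
  ramp stays in \<open>[-1, 1]\<close>, and as \<open>s \<rightarrow> \<infinity>\<close> its derivative tends to \<open>ramp_deriv\<close>, which is
  \<open>2 / L\<close> on the open intervals.\<close>

definition smooth_abs :: "real \<Rightarrow> real \<Rightarrow> real" where
  "smooth_abs s y = ln (cosh (s * y)) / s"

definition smooth_ramp :: "real \<Rightarrow> 'i set \<Rightarrow> ('i \<Rightarrow> real) \<Rightarrow> ('i \<Rightarrow> real) \<Rightarrow> real \<Rightarrow> real \<Rightarrow> real" where
  "smooth_ramp s I c e L x = (\<Sum>i\<in>I. smooth_abs s (x - c i) - smooth_abs s (x - e i)) / L"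

definition smooth_ramp_deriv :: "real \<Rightarrow> 'i set \<Rightarrow> ('i \<Rightarrow> real) \<Rightarrow> ('i \<Rightarrow> real) \<Rightarrow> real \<Rightarrow> real \<Rightarrow> real" where
  "smooth_ramp_deriv s I c e L x = (\<Sum>i\<in>I. tanh (s * (x - c i)) - tanh (s * (x - e i))) / L"

definition ramp_deriv :: "'i set \<Rightarrow> ('i \<Rightarrow> real) \<Rightarrow> ('i \<Rightarrow> real) \<Rightarrow> real \<Rightarrow> real \<Rightarrow> real" where
  "ramp_deriv I c e L x = (\<Sum>i\<in>I. sgn (x - c i) - sgn (x - e i)) / L"

lemma smooth_abs_has_real_derivative:
  assumes "s \<noteq> 0"
  shows "(smooth_abs s has_real_derivative tanh (s * y)) (at y)"
proof -
  have "((\<lambda>y. ln (cosh (s * y)) / s) has_real_derivative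
     (1 / cosh (s * y) * (sinh (s * y) * (s * 1))) / s) (at y)"
    by (auto intro!: derivative_eq_intros)
  then show ?thesis using assms unfolding smooth_abs_def[abs_def] by (simp add: tanh_def)
qed

lemma smooth_abs_lipschitz:
  assumes "s \<noteq> 0"
  shows "\<bar>smooth_abs s u - smooth_abs s v\<bar> \<le> \<bar>u - v\<bar>"
proof -
  have *: "\<bar>smooth_abs s b - smooth_abs s a\<bar> \<le> b - a" if "a < b" for a b
  proof -
    have "\<exists>z. a < z \<and> z < b \<and> smooth_abs s b - smooth_abs s a = (b - a) * tanh (s * z)"
      by (rule MVT2[OF that]) (use smooth_abs_has_real_derivative[OF assms] in auto)
    then obtain z where "smooth_abs s b - smooth_abs s a = (b - a) * tanh (s * z)" by blast
    moreover have "\<bar>tanh (s * z)\<bar> \<le> 1" using tanh_real_bounds[of "s * z"] by auto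
    ultimately show ?thesis using that by (simp add: abs_mult mult_left_le)
  qed
  consider "u < v" | "u = v" | "v < u" by linarith
  then show ?thesis by cases (use *[of u v] *[of v u] in \<open>auto simp: abs_minus_commute\<close>)
qed

lemma smooth_ramp_has_real_derivative:
  assumes "s \<noteq> 0"
  shows "(smooth_ramp s I c e L has_real_derivative smooth_ramp_deriv s I c e L x) (at x)"
proof -
  have "((\<lambda>x. \<Sum>i\<in>I. smooth_abs s (x - c i) - smooth_abs s (x - e i)) has_real_derivative
        (\<Sum>i\<in>I. tanh (s * (x - c i)) * (1 - 0) - tanh (s * (x - e i)) * (1 - 0))) (at x)"
    by (intro DERIV_sum DERIV_diff DERIV_chain2[OF smooth_abs_has_real_derivative[OF assms]]
        derivative_intros)
  from DERIV_cdivide[OF this, of L] show ?thesis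
    unfolding smooth_ramp_def[abs_def] smooth_ramp_deriv_def by simp
qed

lemma deriv_smooth_ramp: "s \<noteq> 0 \<Longrightarrow> deriv (smooth_ramp s I c e L) = smooth_ramp_deriv s I c e L"
  using smooth_ramp_has_real_derivative DERIV_imp_deriv by blast

lemma tanh_poly_sum_smooth_ramp_deriv:
  assumes "finite I"
  shows "tanh_poly_sum (smooth_ramp_deriv s I c e L)"
proof -
  have "smooth_ramp_deriv s I c e L = (\<lambda>x. \<Sum>i\<in>I.
      (1 / L) * tanh (s * x + (- s * c i)) + (- 1 / L) * tanh (s * x + (- s * e i)))"
  proof
    fix x
    have "s * (x - c i) = s * x + (- s * c i)" "s * (x - e i) = s * x + (- s * e i)" for i
      by (simp_all add: algebra_simps)
    then show "smooth_ramp_deriv s I c e L x = (\<Sum>i\<in>I.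
        (1 / L) * tanh (s * x + (- s * c i)) + (- 1 / L) * tanh (s * x + (- s * e i)))"
      by (simp add: smooth_ramp_deriv_def sum_divide_distrib diff_divide_distrib)
  qed
  then show ?thesis
    by (simp only:) (intro tanh_poly_sum_sum assms tanh_poly_sum_add tanh_poly_sum_cmult tanh_poly_sum_tanh)
qed

lemma abs_smooth_ramp_le_1:
  assumes "s \<noteq> 0" "\<forall>i\<in>I. c i \<le> e i" "L = (\<Sum>i\<in>I. e i - c i)" "L > 0"
  shows "\<bar>smooth_ramp s I c e L x\<bar> \<le> 1"
proof -
  have "\<bar>\<Sum>i\<in>I. smooth_abs s (x - c i) - smooth_abs s (x - e i)\<bar>
      \<le> (\<Sum>i\<in>I. \<bar>smooth_abs s (x - c i) - smooth_abs s (x - e i)\<bar>)"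
    by (rule sum_abs)
  also have "\<dots> \<le> (\<Sum>i\<in>I. e i - c i)"
  proof (rule sum_mono)
    fix i assume "i \<in> I"
    have "\<bar>smooth_abs s (x - c i) - smooth_abs s (x - e i)\<bar> \<le> \<bar>(x - c i) - (x - e i)\<bar>"
      by (rule smooth_abs_lipschitz[OF assms(1)])
    then show "\<bar>smooth_abs s (x - c i) - smooth_abs s (x - e i)\<bar> \<le> e i - c i"
      using assms(2) \<open>i \<in> I\<close> by auto
  qed
  finally show ?thesis using assms(3,4) by (simp add: smooth_ramp_def abs_div)
qed

lemma Cb_inf_smooth_ramp:
  assumes "s \<noteq> 0" "finite I" "\<forall>i\<in>I. c i \<le> e i" "L = (\<Sum>i\<in>I. e i - c i)" "L > 0"
  shows "Cb_inf (smooth_ramp s I c e L)"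
proof (rule Cb_inf_if_deriv_tanh_poly_sum)
  show "smooth_ramp s I c e L differentiable at x" for x
    using smooth_ramp_has_real_derivative[OF assms(1)] real_differentiable_def by blast
  show "bounded (range (smooth_ramp s I c e L))"
    unfolding bounded_real using abs_smooth_ramp_le_1[OF assms(1,3-5)] by auto
  show "tanh_poly_sum (deriv (smooth_ramp s I c e L))"
    by (simp add: deriv_smooth_ramp[OF assms(1)] tanh_poly_sum_smooth_ramp_deriv[OF assms(2)])
qed

lemma disjoint_family_on_Ioc_if_Ioo:
  fixes c e :: "'i \<Rightarrow> real"
  assumes "\<forall>i\<in>I. c i < e i" "disjoint_family_on (\<lambda>i. {c i<..<e i}) I"
  shows "disjoint_family_on (\<lambda>i. {c i<..e i}) I"
  unfolding disjoint_family_on_def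
proof (intro ballI impI equals0I)
  fix i j x assume ij: "i \<in> I" "j \<in> I" "i \<noteq> j" and x: "x \<in> {c i<..e i} \<inter> {c j<..e j}"
  define y where "y = (max (c i) (c j) + x) / 2"
  from x have "y \<in> {c i<..<e i} \<inter> {c j<..<e j}" unfolding y_def by (auto simp: max_def)
  moreover have "{c i<..<e i} \<inter> {c j<..<e j} = {}"
    using assms(2) ij unfolding disjoint_family_on_def by blast
  ultimately show False by blast
qed

text \<open>The increments are the masses of disjoint intervals under the Stieltjes measure of \<open>G\<close>.\<close>

lemma sum_increments_le_mono:
  fixes G :: "real \<Rightarrow> real" and c e :: "'i \<Rightarrow> real"
  assumes mono: "\<And>a b. a \<le> b \<Longrightarrow> G a \<le> G b" and rc: "\<And>a. continuous (at_right a) G"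
    and I: "finite I" "I \<noteq> {}" "\<forall>i\<in>I. c i < e i" "disjoint_family_on (\<lambda>i. {c i<..e i}) I"
  shows "(\<Sum>i\<in>I. G (e i) - G (c i)) \<le> G (Max (e ` I)) - G (Min (c ` I))"
proof -
  let ?N = "interval_measure G"
  let ?a = "Min (c ` I)" and ?b = "Max (e ` I)"
  have bounds: "?a \<le> c i" "e i \<le> ?b" if "i \<in> I" for i using that I(1) by auto
  have "?a \<le> ?b"
  proof -
    obtain i where "i \<in> I" using I(2) by auto
    then show ?thesis using bounds[of i] I(3) by force
  qed
  have "ennreal (\<Sum>i\<in>I. G (e i) - G (c i)) = (\<Sum>i\<in>I. ennreal (G (e i) - G (c i)))"
    using I(3) mono by (subst sum_ennreal) (auto simp: less_imp_le)
  also have "\<dots> = (\<Sum>i\<in>I. emeasure ?N {c i<..e i})"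
    using I(3)
    by (intro sum.cong refl emeasure_interval_measure_Ioc[symmetric]) (auto intro: mono rc less_imp_le)
  also have "\<dots> = emeasure ?N (\<Union>i\<in>I. {c i<..e i})"
    using I(1,4) by (intro sum_emeasure) auto
  also have "\<dots> \<le> emeasure ?N {?a<..?b}"
    using bounds by (intro emeasure_mono) (auto, fastforce+)
  also have "\<dots> = ennreal (G ?b - G ?a)"
    using \<open>?a \<le> ?b\<close> by (intro emeasure_interval_measure_Ioc) (auto intro: mono rc)
  finally show ?thesis
    using mono[OF \<open>?a \<le> ?b\<close>] by (subst (asm) ennreal_le_iff) auto
qed

lemma sum_tanh_increments_le_2:
  fixes c e :: "'i \<Rightarrow> real"
  assumes "s > 0" "finite I" "\<forall>i\<in>I. c i < e i" "disjoint_family_on (\<lambda>i. {c i<..e i}) I"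
  shows "(\<Sum>i\<in>I. tanh (s * (x - c i)) - tanh (s * (x - e i))) \<le> 2"
proof (cases "I = {}")
  case False
  define G where "G t = tanh (s * (t - x))" for t
  have "tanh (s * (x - c i)) - tanh (s * (x - e i)) = G (e i) - G (c i)" for i
    using tanh_minus[of "s * (c i - x)"] tanh_minus[of "s * (e i - x)"]
    by (simp add: G_def algebra_simps)
  moreover have "(\<Sum>i\<in>I. G (e i) - G (c i)) \<le> G (Max (e ` I)) - G (Min (c ` I))"
    using assms False unfolding G_def
    by (intro sum_increments_le_mono) (auto intro!: continuous_intros mult_left_mono)
  moreover have "G (Max (e ` I)) - G (Min (c ` I)) \<le> 2"
    using tanh_real_bounds[of "s * (Max (e ` I) - x)"] tanh_real_bounds[of "s * (Min (c ` I) - x)"]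
    by (auto simp: G_def)
  ultimately show ?thesis by simp
qed simp

lemma smooth_ramp_deriv_nonneg:
  assumes "s > 0" "\<forall>i\<in>I. c i \<le> e i" "L > 0"
  shows "smooth_ramp_deriv s I c e L x \<ge> 0"
  unfolding smooth_ramp_deriv_def using assms
  by (intro divide_nonneg_pos sum_nonneg) (auto intro!: mult_left_mono simp: diff_ge_0_iff_ge)

lemma sup_norm_smooth_ramp_deriv:
  assumes "s > 0" "finite I" "\<forall>i\<in>I. c i < e i" "disjoint_family_on (\<lambda>i. {c i<..<e i}) I" "L > 0"
  shows "0 \<le> sup_norm (smooth_ramp_deriv s I c e L)" "sup_norm (smooth_ramp_deriv s I c e L) \<le> 2 / L"
proof -
  have bound: "\<bar>smooth_ramp_deriv s I c e L x\<bar> \<le> 2 / L" for x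
  proof -
    have "smooth_ramp_deriv s I c e L x \<ge> 0"
      using assms by (intro smooth_ramp_deriv_nonneg) (auto simp: less_imp_le)
    moreover have "smooth_ramp_deriv s I c e L x \<le> 2 / L"
      using sum_tanh_increments_le_2[OF assms(1-3) disjoint_family_on_Ioc_if_Ioo[OF assms(3,4)], of x]
        assms(5)
      unfolding smooth_ramp_deriv_def by (simp add: divide_right_mono)
    ultimately show ?thesis by simp
  qed
  then have "bdd_above (range (\<lambda>x. \<bar>smooth_ramp_deriv s I c e L x\<bar>))" by (intro bdd_aboveI2)
  then show "0 \<le> sup_norm (smooth_ramp_deriv s I c e L)"
    unfolding sup_norm_def by (rule cSUP_upper2[where x=0]) auto
  show "sup_norm (smooth_ramp_deriv s I c e L) \<le> 2 / L"
    unfolding sup_norm_def using bound by (intro cSUP_least) auto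
qed

lemma tendsto_tanh_mult_sgn: "(\<lambda>n. tanh ((real n + 1) * t)) \<longlonglongrightarrow> sgn t"
proof -
  have at_top: "(\<lambda>n. tanh ((real n + 1) * t)) \<longlonglongrightarrow> 1" if "t > 0" for t :: real
  proof -
    have "filterlim (\<lambda>n. 1 + real n) at_top sequentially"
      by (rule filterlim_tendsto_add_at_top[OF tendsto_const filterlim_real_sequentially])
    then have "filterlim (\<lambda>n. t * (1 + real n)) at_top sequentially"
      by (rule filterlim_tendsto_pos_mult_at_top[OF tendsto_const that])
    then have "filterlim (\<lambda>n. (real n + 1) * t) at_top sequentially"
      by (simp add: algebra_simps)
    from filterlim_compose[OF tanh_real_at_top this] show ?thesis .
  qed
  consider "t > 0" | "t = 0" | "t < 0" by linarith
  then show ?thesis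
  proof cases
    case 3
    then have "(\<lambda>n. - tanh ((real n + 1) * (- t))) \<longlonglongrightarrow> - 1"
      using at_top[of "- t"] by (intro tendsto_minus) auto
    with 3 show ?thesis by simp
  qed (use at_top in auto)
qed

lemma smooth_ramp_deriv_tendsto:
  "(\<lambda>n. smooth_ramp_deriv (real n + 1) I c e L x) \<longlonglongrightarrow> ramp_deriv I c e L x"
  unfolding smooth_ramp_deriv_def ramp_deriv_def divide_inverse
  by (intro tendsto_mult_right tendsto_sum tendsto_diff tendsto_tanh_mult_sgn)

lemma ramp_deriv_ge_indicator:
  assumes "finite I" "\<forall>i\<in>I. c i < e i" "L > 0"
  shows "2 / L * indicator (\<Union>i\<in>I. {c i<..<e i}) x \<le> ramp_deriv I c e L x"
proof -
  have nonneg: "\<forall>i\<in>I. 0 \<le> sgn (x - c i) - sgn (x - e i)" using assms(2) by (auto simp: sgn_if)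
  have "2 * indicator (\<Union>i\<in>I. {c i<..<e i}) x \<le> (\<Sum>i\<in>I. sgn (x - c i) - sgn (x - e i))"
  proof (cases "x \<in> (\<Union>i\<in>I. {c i<..<e i})")
    case True
    then obtain j where j: "j \<in> I" "c j < x" "x < e j" by auto
    then have "2 = sgn (x - c j) - sgn (x - e j)" by simp
    also have "\<dots> \<le> (\<Sum>i\<in>I. sgn (x - c i) - sgn (x - e i))"
      by (rule member_le_sum) (use j nonneg assms(1) in auto)
    finally show ?thesis using True by simp
  qed (use nonneg in \<open>auto intro!: sum_nonneg\<close>)
  then show ?thesis using assms(3) unfolding ramp_deriv_def by (simp add: divide_right_mono)
qed

lemma abs_sum_increments_le:
  fixes g :: "real \<Rightarrow> real"
  assumes "\<And>y. \<bar>g y\<bar> \<le> 1" "L > 0"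
  shows "\<bar>(\<Sum>i\<in>I. g (x - c i) - g (x - e i)) / L\<bar> \<le> 2 * card I / L"
proof -
  have "\<bar>g (x - c i) - g (x - e i)\<bar> \<le> 2" for i
    using assms(1)[of "x - c i"] assms(1)[of "x - e i"] by linarith
  then have "(\<Sum>i\<in>I. \<bar>g (x - c i) - g (x - e i)\<bar>) \<le> (\<Sum>i\<in>I. 2)"
    by (intro sum_mono)
  moreover have "\<bar>\<Sum>i\<in>I. g (x - c i) - g (x - e i)\<bar> \<le> (\<Sum>i\<in>I. \<bar>g (x - c i) - g (x - e i)\<bar>)"
    by (rule sum_abs)
  moreover have "(\<Sum>i\<in>I. 2 :: real) = 2 * card I" by simp
  ultimately have "\<bar>\<Sum>i\<in>I. g (x - c i) - g (x - e i)\<bar> \<le> 2 * card I"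
    by linarith
  then have "\<bar>\<Sum>i\<in>I. g (x - c i) - g (x - e i)\<bar> / L \<le> 2 * card I / L"
    using assms(2) by (intro divide_right_mono) auto
  then show ?thesis
    by (simp only: abs_div_pos[OF assms(2)])
qed

lemma abs_smooth_ramp_deriv_le: "L > 0 \<Longrightarrow> \<bar>smooth_ramp_deriv s I c e L x\<bar> \<le> 2 * card I / L"
  unfolding smooth_ramp_deriv_def
  using abs_sum_increments_le[of "\<lambda>y. tanh (s * y)"] tanh_real_bounds by (simp add: abs_le_iff less_imp_le)

lemma abs_ramp_deriv_le: "L > 0 \<Longrightarrow> \<bar>ramp_deriv I c e L x\<bar> \<le> 2 * card I / L"
  unfolding ramp_deriv_def using abs_sum_increments_le[of sgn] by (simp add: abs_sgn_eq)

lemma smooth_ramp_deriv_borel: "smooth_ramp_deriv s I c e L \<in> borel_measurable borel"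
  unfolding smooth_ramp_deriv_def
  by (intro borel_measurable_divide borel_measurable_const borel_measurable_continuous_onI
      continuous_intros) auto

lemma ramp_deriv_borel: "ramp_deriv I c e L \<in> borel_measurable borel"
  by (rule borel_measurable_LIMSEQ_real[OF smooth_ramp_deriv_tendsto smooth_ramp_deriv_borel])

section \<open>Densities whose law is small on short unions of intervals\<close>

lemma nn_integral_powr_layer_cake:
  fixes g :: "real \<Rightarrow> real" and p :: real
  assumes g[measurable]: "g \<in> borel_measurable borel" and g_nonneg: "\<And>y. g y \<ge> 0" and p: "p > 1"
  shows "(\<integral>\<^sup>+y. ennreal (g y powr p) \<partial>lborel) =
         (\<integral>\<^sup>+t. ennreal (p * t powr (p - 1)) * emeasure lborel {y. 0 \<le> t \<and> t \<le> g y} \<partial>lborel)"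
proof -
  define F where "F y t = (if 0 \<le> t \<and> t \<le> g y then ennreal (p * t powr (p - 1)) else 0)" for y t
  have inner: "ennreal (g y powr p) = (\<integral>\<^sup>+t. F y t \<partial>lborel)" for y
  proof -
    have "((\<lambda>t. p * t powr (p - 1)) has_integral p * (g y powr (p - 1 + 1) / (p - 1 + 1))) {0..g y}"
      using p g_nonneg by (intro has_integral_mult_right has_integral_powr_from_0) auto
    then have "((\<lambda>t. p * t powr (p - 1)) has_integral g y powr p) {0..g y}"
      using p by simp
    then have "(\<integral>\<^sup>+t. ennreal (p * t powr (p - 1)) * indicator {0..g y} t \<partial>lborel) = g y powr p"
      by (rule nn_integral_has_integral_lebesgue'[rotated]) (use p in auto)
    moreover have "(\<lambda>t. ennreal (p * t powr (p - 1)) * indicator {0..g y} t) = F y"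
      by (auto simp: F_def indicator_def fun_eq_iff)
    ultimately show ?thesis by simp
  qed
  have "case_prod F \<in> borel_measurable (lborel \<Otimes>\<^sub>M lborel)"
    unfolding F_def[abs_def] by measurable
  then have "(\<integral>\<^sup>+y. (\<integral>\<^sup>+t. F y t \<partial>lborel) \<partial>lborel) = (\<integral>\<^sup>+t. (\<integral>\<^sup>+y. F y t \<partial>lborel) \<partial>lborel)"
    by (rule lborel_pair.Fubini'[symmetric])
  also have "\<dots> = (\<integral>\<^sup>+t. ennreal (p * t powr (p - 1)) * emeasure lborel {y. 0 \<le> t \<and> t \<le> g y} \<partial>lborel)"
  proof (rule nn_integral_cong)
    fix t
    have "(\<lambda>y. F y t) = (\<lambda>y. ennreal (p * t powr (p - 1)) * indicator {y. 0 \<le> t \<and> t \<le> g y} y)"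
      by (auto simp: F_def indicator_def fun_eq_iff)
    moreover have "{y. 0 \<le> t \<and> t \<le> g y} \<in> sets lborel" by measurable
    ultimately show "(\<integral>\<^sup>+y. F y t \<partial>lborel) = ennreal (p * t powr (p - 1)) * emeasure lborel {y. 0 \<le> t \<and> t \<le> g y}"
      by (simp add: nn_integral_cmult_indicator)
  qed
  finally show ?thesis by (simp add: inner)
qed

lemma nn_integral_powr_Icc_0:
  assumes "e > -1" "c \<ge> 0" "b \<ge> 0"
  shows "(\<integral>\<^sup>+t. ennreal (c * t powr e) * indicator {0..b} t \<partial>lborel) = ennreal (c * (b powr (e + 1) / (e + 1)))"
  using assms
  by (intro nn_integral_has_integral_lebesgue' has_integral_mult_right has_integral_powr_from_0) auto

lemma nn_integral_powr_Ici:
  assumes "e < -1" "c \<ge> 0" "a > 0"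
  shows "(\<integral>\<^sup>+t. ennreal (c * t powr e) * indicator {a..} t \<partial>lborel) = ennreal (c * (- (a powr (e + 1)) / (e + 1)))"
  using assms
  by (intro nn_integral_has_integral_lebesgue' has_integral_mult_right has_integral_powr_to_inf) auto

text \<open>\<open>d / (d - 1)\<close> is read as \<open>\<infinity>\<close> when \<open>d = 1\<close>.\<close>

definition Lp_const :: "nat \<Rightarrow> real \<Rightarrow> real" where
  "Lp_const d p = p / (p - 1) + (if d = 1 then 0 else p / (real d / (real d - 1) - p))"

lemma Lp_const_pos: "p > 1 \<Longrightarrow> d = 1 \<or> p < real d / (real d - 1) \<Longrightarrow> Lp_const d p > 0"
  unfolding Lp_const_def by (smt (verit) divide_pos_pos)

locale interval_concentration =
  fixes N :: "real measure" and \<rho> :: "real \<Rightarrow> real" and A :: real and d :: nat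
  assumes N_density: "N = density lborel (\<lambda>x. ennreal (\<rho> x))"
    and \<rho>_borel: "\<rho> \<in> borel_measurable borel" and \<rho>_nonneg: "\<And>x. \<rho> x \<ge> 0"
    and prob_space_N: "prob_space N"
    and d_pos: "d \<ge> 1"
    and measure_Union_intervals_le: "\<And>F. finite F \<Longrightarrow> disjoint F \<Longrightarrow>
       (\<forall>K\<in>F. \<exists>a b. a < b \<and> K = {a<..<b}) \<Longrightarrow>
       measure N (\<Union>F) \<le> A * (\<Sum>K\<in>F. measure lborel K) powr (1 / real d)"
begin

sublocale prob_space N
  by (rule prob_space_N)

lemma sets_N [simp, measurable_cong]: "sets N = sets borel"
  by (simp add: N_density)

lemma space_N [simp]: "space N = UNIV"
  by (simp add: N_density)

lemma null_sets_lborel_imp_null_sets_N: "X \<in> null_sets lborel \<Longrightarrow> X \<in> null_sets N"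
  unfolding N_density using \<rho>_borel
  by (subst null_sets_density_iff) (auto dest: AE_not_in)

lemma A_pos: "A > 0"
proof (rule ccontr)
  assume "\<not> A > 0"
  define T where "T n = {- real n - 1<..<real n + 1}" for n :: nat
  have "measure N (T n) \<le> A * (measure lborel (T n)) powr (1 / real d)" for n
  proof -
    have "\<exists>a b. a < b \<and> T n = {a<..<b}"
      unfolding T_def by (intro exI[of _ "- real n - 1"] exI[of _ "real n + 1"]) auto
    with measure_Union_intervals_le[of "{T n}"] show ?thesis by simp
  qed
  also have "A * (measure lborel (T n)) powr (1 / real d) \<le> 0" for n
    using \<open>\<not> A > 0\<close> by (simp add: mult_nonpos_nonneg)
  finally have "measure N (T n) = 0" for n by (simp add: measure_nonneg antisym)
  moreover have "(\<lambda>n. measure N (T n)) \<longlonglongrightarrow> measure N (\<Union>n. T n)"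
    by (intro finite_Lim_measure_incseq) (auto simp: T_def incseq_def)
  moreover have "(\<Union>n. T n) = UNIV"
  proof -
    have "x \<in> T (nat \<lceil>\<bar>x\<bar>\<rceil>)" for x by (auto simp: T_def) linarith+
    then show ?thesis by blast
  qed
  ultimately show False using prob_space.prob_space[OF prob_space_N] by (simp add: LIMSEQ_const_iff)
qed

lemma measure_Union_subfamily_le:
  assumes F: "finite F" "F \<subseteq> G" and G: "disjoint G" "\<forall>K\<in>G. \<exists>a b. a < b \<and> K = {a<..<b}"
    and G_fmeasurable: "\<Union>G \<in> fmeasurable lborel"
  shows "measure N (\<Union>F) \<le> A * measure lborel (\<Union>G) powr (1 / real d)"
proof -
  have F_intervals: "\<forall>K\<in>F. \<exists>a b. a < b \<and> K = {a<..<b}" "disjoint F"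
    using F(2) G pairwise_subset by blast+
  have "K \<in> fmeasurable lborel" if "K \<in> F" for K
    using F_intervals that by (force simp: fmeasurable_def emeasure_lborel_Ioo)
  then have "(\<Sum>K\<in>F. measure lborel K) = measure lborel (\<Union>F)"
    using F F_intervals by (intro measure_Union'[symmetric]) auto
  also have "\<dots> \<le> measure lborel (\<Union>G)"
  proof (rule measure_mono_fmeasurable[OF _ _ G_fmeasurable])
    show "\<Union>F \<subseteq> \<Union>G" using F by auto
    show "\<Union>F \<in> sets lborel" using F_intervals(1) by (auto intro!: borel_open open_Union)
  qed
  finally have "(\<Sum>K\<in>F. measure lborel K) \<le> measure lborel (\<Union>G)" .
  then have "A * (\<Sum>K\<in>F. measure lborel K) powr (1 / real d) \<le> A * measure lborel (\<Union>G) powr (1 / real d)"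
    using A_pos by (intro mult_left_mono powr_mono2) (auto intro: sum_nonneg)
  with measure_Union_intervals_le[OF F(1) F_intervals(2,1)] show ?thesis by linarith
qed

lemma measure_Union_countable_intervals_le:
  assumes "countable G" "disjoint G" "\<forall>K\<in>G. \<exists>a b. a < b \<and> K = {a<..<b}"
    and finite_length: "emeasure lborel (\<Union>G) < \<infinity>"
  shows "measure N (\<Union>G) \<le> A * measure lborel (\<Union>G) powr (1 / real d)"
proof (cases "G = {}")
  case False
  define V where "V n = \<Union>(from_nat_into G ` {..<n})" for n
  have "open K" if "K \<in> G" for K using assms(3) that by auto
  then have "open (V n)" for n
    unfolding V_def using from_nat_into[OF False] by (intro open_UN) auto
  then have range_V: "range V \<subseteq> sets N" by auto
  have "(\<Union>n. V n) = \<Union>(range (from_nat_into G))"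
    unfolding V_def by (auto intro: lessI)
  then have Union_V: "(\<Union>n. V n) = \<Union>G"
    using range_from_nat_into[OF False assms(1)] by simp
  have G_fmeasurable: "\<Union>G \<in> fmeasurable lborel"
    using finite_length sets.countable_UN[OF range_V] Union_V by (auto simp: fmeasurable_def)
  have "measure N (V n) \<le> A * measure lborel (\<Union>G) powr (1 / real d)" for n
    unfolding V_def using from_nat_into[OF False] assms(2,3) G_fmeasurable
    by (intro measure_Union_subfamily_le) auto
  moreover have "(\<lambda>n. measure N (V n)) \<longlonglongrightarrow> measure N (\<Union>G)"
  proof -
    have "incseq V" unfolding incseq_def V_def by (intro allI impI UN_mono image_mono) auto
    with range_V show ?thesis unfolding Union_V[symmetric] by (intro finite_Lim_measure_incseq)
  qed
  ultimately show ?thesis by (intro LIMSEQ_le_const2) auto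
qed simp

lemma measure_Union_le_interiors:
  assumes "countable D" "\<forall>K\<in>D. \<exists>a b. a < b \<and> K = {a..b}"
  shows "measure N (\<Union>D) \<le> measure N (\<Union>K\<in>D. interior K)"
proof -
  have interval: "interior K = {Inf K<..<Sup K}" "K = {Inf K..Sup K}" if "K \<in> D" for K
    using assms(2) that by auto
  define E where "E = Inf ` D \<union> Sup ` D"
  have E_null: "E \<in> null_sets N"
    unfolding E_def using assms(1)
    by (intro null_sets_lborel_imp_null_sets_N countable_imp_null_set_lborel) auto
  have "\<Union>D \<subseteq> (\<Union>K\<in>D. interior K) \<union> E"
  proof
    fix x assume "x \<in> \<Union>D"
    then obtain K where K: "K \<in> D" "x \<in> K" by auto
    then have "Inf K \<le> x" "x \<le> Sup K" using interval(2)[OF K(1)] by auto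
    show "x \<in> (\<Union>K\<in>D. interior K) \<union> E"
    proof (cases "x = Inf K \<or> x = Sup K")
      case False
      then have "x \<in> interior K" using interval(1)[OF K(1)] \<open>Inf K \<le> x\<close> \<open>x \<le> Sup K\<close> by auto
      then show ?thesis using K(1) by blast
    qed (use K(1) in \<open>auto simp: E_def\<close>)
  qed
  moreover have "\<Union>D \<in> sets borel"
    using assms by (intro sets.countable_Union) auto
  moreover have "(\<Union>K\<in>D. interior K) \<in> sets borel"
    by (intro borel_open open_UN) auto
  ultimately have "measure N (\<Union>D) \<le> measure N ((\<Union>K\<in>D. interior K) \<union> E)"
    using null_setsD2[OF E_null] by (intro finite_measure_mono) auto
  also have "\<dots> \<le> measure N (\<Union>K\<in>D. interior K) + measure N E"
    using \<open>(\<Union>K\<in>D. interior K) \<in> sets borel\<close> null_setsD2[OF E_null] by (intro measure_Un_le) auto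
  finally show ?thesis by (simp add: measure_def null_setsD1[OF E_null])
qed

lemma measure_Union_closed_intervals_le:
  assumes "countable D" "\<forall>K\<in>D. \<exists>a b. a < b \<and> K = {a..b}"
    and "pairwise (\<lambda>K K'. interior K \<inter> interior K' = {}) D"
    and "emeasure lborel (\<Union>D) < \<infinity>"
  shows "measure N (\<Union>D) \<le> A * measure lborel (\<Union>D) powr (1 / real d)"
proof -
  define G where "G = interior ` D"
  have D_borel: "\<Union>D \<in> sets borel"
    using assms(1,2) by (intro sets.countable_Union) auto
  have G_intervals: "\<forall>K\<in>G. \<exists>a b. a < b \<and> K = {a<..<b}"
    using assms(2) unfolding G_def by fastforce
  have G_disjoint: "disjoint G"
    unfolding G_def
  proof (rule pairwise_imageI)
    fix K K' assume "K \<in> D" "K' \<in> D" "K \<noteq> K'"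
    then show "disjnt (interior K) (interior K')"
      using assms(3) unfolding pairwise_def disjnt_def by blast
  qed
  have G_subset: "\<Union>G \<subseteq> \<Union>D"
    unfolding G_def using interior_subset by blast
  have G_borel: "\<Union>G \<in> sets borel"
    using G_intervals by (auto intro!: borel_open open_Union)
  have "measure lborel (\<Union>G) \<le> measure lborel (\<Union>D)"
    using G_subset G_borel D_borel assms(4)
    by (intro measure_mono_fmeasurable) (auto simp: fmeasurable_def)
  then have "A * measure lborel (\<Union>G) powr (1 / real d) \<le> A * measure lborel (\<Union>D) powr (1 / real d)"
    using A_pos by (intro mult_left_mono powr_mono2) auto
  moreover have "measure N (\<Union>G) \<le> A * measure lborel (\<Union>G) powr (1 / real d)"
    using G_disjoint G_intervals assms(1,4) emeasure_mono[OF G_subset, of lborel] D_borel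
    unfolding G_def by (intro measure_Union_countable_intervals_le) auto
  moreover have "measure N (\<Union>D) \<le> measure N (\<Union>G)"
    unfolding G_def using assms(1,2) by (rule measure_Union_le_interiors)
  ultimately show ?thesis by linarith
qed

lemma measure_le_bounded_borel_plus:
  assumes S: "S \<in> sets borel" "S \<subseteq> {a..b}" and "a < b" "e > 0"
  shows "measure N S \<le> A * (measure lborel S + e) powr (1 / real d)"
proof -
  have S_lmeasurable: "S \<in> lmeasurable"
    by (rule fmeasurableI2[OF lmeasurable_cbox[of a b]]) (use S in auto)
  have S_cbox: "S \<subseteq> cbox a b" using S by simp
  obtain D where D: "countable D"
      "\<And>K. K \<in> D \<Longrightarrow> K \<subseteq> cbox a b \<and> K \<noteq> {} \<and> (\<exists>c d. K = cbox c d)"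
      "pairwise (\<lambda>A B. interior A \<inter> interior B = {}) D"
      "\<And>u v. cbox u v \<in> D \<Longrightarrow> \<exists>n. \<forall>i \<in> Basis. v \<bullet> i - u \<bullet> i = (b \<bullet> i - a \<bullet> i) / 2 ^ n"
      "\<And>K. \<lbrakk>K \<in> D; box a b \<noteq> {}\<rbrakk> \<Longrightarrow> interior K \<noteq> {}"
      "S \<subseteq> \<Union>D" "\<Union>D \<in> lmeasurable" "measure lebesgue (\<Union>D) \<le> measure lebesgue S + e"
    by (rule measurable_outer_intervals_bounded[OF S_lmeasurable S_cbox \<open>e > 0\<close>], rule that)
      assumption+
  have intervals: "\<forall>K\<in>D. \<exists>c d. c < d \<and> K = {c..d}"
  proof
    fix K assume K: "K \<in> D"
    then obtain c d where "K = cbox c d" using D(2) by blast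
    moreover have "interior K \<noteq> {}" using D(5)[OF K] \<open>a < b\<close> by simp
    ultimately show "\<exists>c d. c < d \<and> K = {c..d}" by auto
  qed
  have D_borel: "\<Union>D \<in> sets borel"
    using D(1) intervals by (intro sets.countable_Union) auto
  have D_finite: "emeasure lborel (\<Union>D) < \<infinity>"
  proof -
    have "emeasure lborel (\<Union>D) \<le> emeasure lborel {a..b}"
      using D(2) by (intro emeasure_mono) auto
    then show ?thesis using \<open>a < b\<close> by (simp add: order.strict_trans1)
  qed
  have "measure N S \<le> measure N (\<Union>D)"
    using D(6) D_borel S by (intro finite_measure_mono) auto
  also have "\<dots> \<le> A * measure lborel (\<Union>D) powr (1 / real d)"
    by (rule measure_Union_closed_intervals_le[OF D(1) intervals D(3) D_finite])
  also have "\<dots> \<le> A * (measure lborel S + e) powr (1 / real d)"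
    using D(8) D_borel S A_pos by (intro mult_left_mono powr_mono2) auto
  finally show ?thesis .
qed

lemma measure_le_bounded_borel:
  assumes S: "S \<in> sets borel" "S \<subseteq> {a..b}" and "a < b"
  shows "measure N S \<le> A * measure lborel S powr (1 / real d)"
proof -
  have "(\<lambda>n. A * (measure lborel S + 1 / (real n + 1)) powr (1 / real d))
      \<longlonglongrightarrow> A * (measure lborel S + 0) powr (1 / real d)"
    using d_pos LIMSEQ_inverse_real_of_nat
    by (intro tendsto_mult tendsto_const tendsto_powr' tendsto_add disjI2 conjI always_eventually allI)
       (auto simp: inverse_eq_divide add.commute)
  then have "(\<lambda>n. A * (measure lborel S + 1 / (real n + 1)) powr (1 / real d))
      \<longlonglongrightarrow> A * measure lborel S powr (1 / real d)"
    by simp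
  then show ?thesis
    by (rule LIMSEQ_le_const) (auto intro!: exI[of _ 0] measure_le_bounded_borel_plus[OF assms])
qed

lemma measure_le_borel:
  assumes S: "S \<in> sets borel" and finite_length: "emeasure lborel S < \<infinity>"
  shows "measure N S \<le> A * measure lborel S powr (1 / real d)"
proof -
  define T where "T n = S \<inter> {- real n - 1..real n + 1}" for n :: nat
  have T_borel: "T n \<in> sets borel" for n using S by (auto simp: T_def)
  have "measure N (T n) \<le> A * measure lborel S powr (1 / real d)" for n
  proof -
    have "measure N (T n) \<le> A * measure lborel (T n) powr (1 / real d)"
      by (rule measure_le_bounded_borel[OF T_borel, where a="- real n - 1" and b="real n + 1"]) (auto simp: T_def)
    also have "\<dots> \<le> A * measure lborel S powr (1 / real d)"
    proof -
      have "measure lborel (T n) \<le> measure lborel S"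
        using finite_length S T_borel by (intro measure_mono_fmeasurable) (auto simp: T_def fmeasurable_def)
      then show ?thesis using A_pos by (intro mult_left_mono powr_mono2) auto
    qed
    finally show ?thesis .
  qed
  moreover have "(\<lambda>n. measure N (T n)) \<longlonglongrightarrow> measure N (\<Union>n. T n)"
    using T_borel by (intro finite_Lim_measure_incseq) (auto simp: T_def incseq_def)
  moreover have "(\<Union>n. T n) = S"
  proof -
    have "x \<in> (\<Union>n. T n)" if "x \<in> S" for x
    proof -
      obtain n :: nat where "\<bar>x\<bar> \<le> real n" using real_arch_simple by blast
      then show ?thesis using that unfolding T_def by (auto intro!: exI[of _ n])
    qed
    then show ?thesis by (auto simp: T_def)
  qed
  ultimately show ?thesis by (intro LIMSEQ_le_const2) auto
qed


lemma level_set_borel [measurable]: "{y. t \<le> \<rho> y} \<in> sets borel"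
  using \<rho>_borel by measurable

lemma level_set_markov:
  assumes "t > 0"
  shows "emeasure lborel {y. t \<le> \<rho> y} < \<infinity>"
    and "t * measure lborel {y. t \<le> \<rho> y} \<le> measure N {y. t \<le> \<rho> y}"
proof -
  define X where "X = {y. t \<le> \<rho> y}"
  have "ennreal t * emeasure lborel X = (\<integral>\<^sup>+y. ennreal t * indicator X y \<partial>lborel)"
    by (simp add: X_def nn_integral_cmult_indicator)
  also have "\<dots> \<le> (\<integral>\<^sup>+y. ennreal (\<rho> y) * indicator X y \<partial>lborel)"
    by (intro nn_integral_mono) (simp add: X_def indicator_def ennreal_leI)
  also have "\<dots> = emeasure N X"
    unfolding N_density using \<rho>_borel by (subst emeasure_density) (auto simp: X_def)
  finally have le: "ennreal t * emeasure lborel X \<le> emeasure N X" .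
  show finite_length: "emeasure lborel {y. t \<le> \<rho> y} < \<infinity>"
  proof (rule ccontr)
    assume "\<not> ?thesis"
    then have "emeasure lborel X = \<infinity>" by (simp add: X_def less_top[symmetric])
    then have "ennreal t * emeasure lborel X = \<infinity>" using assms by (simp add: ennreal_mult_top)
    with le emeasure_le_1[of X] show False by (simp add: top_unique)
  qed
  have "ennreal (t * measure lborel X) = ennreal t * emeasure lborel X"
    using finite_length assms unfolding X_def by (simp add: emeasure_eq_ennreal_measure ennreal_mult)
  also note le
  finally show "t * measure lborel {y. t \<le> \<rho> y} \<le> measure N {y. t \<le> \<rho> y}"
    unfolding X_def by (simp add: emeasure_eq_measure)
qed

lemma level_set_le_inverse:
  assumes "t > 0"
  shows "measure lborel {y. t \<le> \<rho> y} \<le> 1 / t"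
proof -
  have "t * measure lborel {y. t \<le> \<rho> y} \<le> 1"
    using level_set_markov(2)[OF assms] prob_le_1 by (rule order_trans)
  then show ?thesis using assms by (simp add: field_simps)
qed

lemma level_set_le_measure_powr:
  assumes "t > 0"
  shows "t * measure lborel {y. t \<le> \<rho> y} \<le> A * measure lborel {y. t \<le> \<rho> y} powr (1 / real d)"
  using level_set_markov[OF assms] measure_le_borel[OF level_set_borel] by (meson order_trans)

lemma level_set_le_power:
  assumes "d > 1" "t > 0"
  shows "measure lborel {y. t \<le> \<rho> y} \<le> (A / t) powr (real d / (real d - 1))"
proof -
  define m where "m = measure lborel {y. t \<le> \<rho> y}"
  show ?thesis
  proof (cases "m = 0")
    case False
    then have m_pos: "m > 0" by (simp add: m_def order_less_le)
    have "m powr (1 / real d) * (t * m powr (1 - 1 / real d)) = t * m"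
      using m_pos by (simp add: powr_add[symmetric])
    also have "\<dots> \<le> m powr (1 / real d) * A"
      using level_set_le_measure_powr[OF assms(2)] by (simp add: m_def mult.commute)
    finally have "m powr (1 - 1 / real d) \<le> A / t"
      using m_pos assms(2) by (simp add: field_simps)
    then have "(m powr (1 - 1 / real d)) powr (real d / (real d - 1)) \<le> (A / t) powr (real d / (real d - 1))"
      using assms(1) by (intro powr_mono2) auto
    moreover have "(m powr (1 - 1 / real d)) powr (real d / (real d - 1)) = m"
      using assms(1) m_pos by (simp add: powr_powr field_simps)
    ultimately show ?thesis by (simp add: m_def)
  qed (simp add: m_def)
qed

lemma level_set_null:
  assumes "d = 1" "t > A"
  shows "measure lborel {y. t \<le> \<rho> y} = 0"
proof -
  define m where "m = measure lborel {y. t \<le> \<rho> y}"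
  have "t * m \<le> A * m"
    using level_set_le_measure_powr[of t] assms A_pos by (simp add: m_def)
  then have "(t - A) * m \<le> 0" by (simp add: algebra_simps)
  then show ?thesis using assms(2) by (simp add: m_def mult_le_0_iff measure_le_0_iff)
qed


text \<open>The layer-cake integrand \<open>p t\<^bsup>p-1\<^esup> |{\<rho> \<ge> t}|\<close> is split at \<open>t\<^sub>0 = A\<^sup>d\<close>: below it the
  Markov bound \<open>|{\<rho> \<ge> t}| \<le> 1/t\<close> is integrable at \<open>0\<close> since \<open>p > 1\<close>, above it the bound
  \<open>(A / t)\<^bsup>d/(d-1)\<^esup>\<close> is integrable at \<open>\<infinity>\<close> since \<open>p < d / (d - 1)\<close>.\<close>

lemma layer_integrand_le_below:
  assumes "p > 1" "t > 0"
  shows "p * t powr (p - 1) * measure lborel {y. t \<le> \<rho> y} \<le> p * t powr (p - 2)"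
proof -
  have "p * t powr (p - 1) * measure lborel {y. t \<le> \<rho> y} \<le> p * t powr (p - 1) * (1 / t)"
    using level_set_le_inverse[OF assms(2)] assms(1) by (intro mult_left_mono) auto
  also have "\<dots> = p * t powr (p - 2)"
  proof -
    have "t powr (p - 1) = t powr (p - 2) * t" using powr_add[of t "p - 2" 1] assms(2) by simp
    then show ?thesis using assms(2) by simp
  qed
  finally show ?thesis .
qed

lemma layer_integrand_le_above:
  assumes "p > 1" "t > A powr real d"
  shows "p * t powr (p - 1) * measure lborel {y. t \<le> \<rho> y}
    \<le> (if d = 1 then 0 else p * A powr (real d / (real d - 1)) * t powr (p - 1 - real d / (real d - 1)))"
proof (cases "d = 1")
  case True
  then have "t > A" using assms(2) A_pos by simp
  with True show ?thesis by (simp add: level_set_null)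
next
  case False
  then have "d > 1" using d_pos by simp
  have "t > 0" using assms(2) A_pos by (smt (verit) powr_gt_zero)
  have "p * t powr (p - 1) * measure lborel {y. t \<le> \<rho> y}
      \<le> p * t powr (p - 1) * (A / t) powr (real d / (real d - 1))"
    using level_set_le_power[OF \<open>d > 1\<close> \<open>t > 0\<close>] assms(1) by (intro mult_left_mono) auto
  also have "\<dots> = p * A powr (real d / (real d - 1)) * t powr (p - 1 - real d / (real d - 1))"
  proof -
    have "t powr (p - 1) * (A / t) powr (real d / (real d - 1))
        = A powr (real d / (real d - 1)) * (t powr (p - 1) / t powr (real d / (real d - 1)))"
      by (simp add: powr_divide)
    also have "t powr (p - 1) / t powr (real d / (real d - 1)) = t powr (p - 1 - real d / (real d - 1))"
      by (simp add: powr_diff)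
    finally show ?thesis by simp
  qed
  finally show ?thesis using False by simp
qed

lemma layer_cake_integrand_le:
  assumes p: "p > 1"
  shows "ennreal (p * t powr (p - 1)) * emeasure lborel {y. 0 \<le> t \<and> t \<le> \<rho> y}
    \<le> ennreal (p * t powr (p - 2)) * indicator {0..A powr real d} t
      + ennreal (if d = 1 then 0 else p * A powr (real d / (real d - 1)) * t powr (p - 1 - real d / (real d - 1)))
        * indicator {A powr real d..} t"
    (is "_ \<le> _ + ennreal ?large * _")
proof (cases "t > 0")
  case True
  define m where "m = measure lborel {y. t \<le> \<rho> y}"
  have "emeasure lborel {y. 0 \<le> t \<and> t \<le> \<rho> y} = ennreal m"
    using level_set_markov(1)[OF True] True by (simp add: m_def emeasure_eq_ennreal_measure)
  then have lhs: "ennreal (p * t powr (p - 1)) * emeasure lborel {y. 0 \<le> t \<and> t \<le> \<rho> y}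
      = ennreal (p * t powr (p - 1) * m)"
    using p by (simp add: m_def ennreal_mult)
  show ?thesis
  proof (cases "t \<le> A powr real d")
    case True
    then have "ennreal (p * t powr (p - 1) * m) \<le> ennreal (p * t powr (p - 2)) * indicator {0..A powr real d} t"
      using layer_integrand_le_below[OF p \<open>t > 0\<close>] \<open>t > 0\<close> by (simp add: m_def ennreal_leI)
    then show ?thesis unfolding lhs by (rule order_trans) (intro add_increasing2, auto)
  next
    case False
    then have "ennreal (p * t powr (p - 1) * m) \<le> ennreal ?large * indicator {A powr real d..} t"
      using layer_integrand_le_above[OF p, of t] by (simp add: m_def ennreal_leI)
    then show ?thesis unfolding lhs by (rule order_trans) (intro add_increasing, auto)
  qed
qed (cases "t = 0", use p in auto)

lemma nn_integral_powr_density_le: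
  assumes p: "p > 1" and p_lt: "d = 1 \<or> p < real d / (real d - 1)"
  shows "(\<integral>\<^sup>+y. ennreal (\<rho> y powr p) \<partial>lborel) \<le> ennreal (Lp_const d p * A powr (real d * (p - 1)))"
proof -
  define q where "q = real d / (real d - 1)"
  define t0 where "t0 = A powr real d"
  define large where "large t = (if d = 1 then 0 else p * A powr q * t powr (p - 1 - q))" for t
  have t0_pos: "t0 > 0" using A_pos by (simp add: t0_def)
  have small_integral: "(\<integral>\<^sup>+t. ennreal (p * t powr (p - 2)) * indicator {0..t0} t \<partial>lborel)
      = ennreal (p / (p - 1) * A powr (real d * (p - 1)))"
    using nn_integral_powr_Icc_0[of "p - 2" p t0] p t0_pos by (simp add: t0_def powr_powr)
  have large_integral: "(\<integral>\<^sup>+t. ennreal (large t) * indicator {t0..} t \<partial>lborel)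
      = ennreal ((if d = 1 then 0 else p / (q - p)) * A powr (real d * (p - 1)))"
  proof (cases "d = 1")
    case False
    then have "real d > 1" "p < q" using d_pos p_lt by (auto simp: q_def)
    have "q * (real d - 1) = real d" using \<open>real d > 1\<close> by (simp add: q_def)
    then have "q + real d * (p - q) = real d * (p - 1)" by (simp add: algebra_simps)
    then have exponent: "A powr q * t0 powr (p - q) = A powr (real d * (p - 1))"
      by (simp add: t0_def powr_powr flip: powr_add)
    have "p * A powr q * (- (t0 powr (p - 1 - q + 1)) / (p - 1 - q + 1))
        = p / (q - p) * (A powr q * t0 powr (p - q))"
      using \<open>p < q\<close> by (simp add: field_simps)
    then show ?thesis
      using nn_integral_powr_Ici[of "p - 1 - q" "p * A powr q" t0] \<open>p < q\<close> p t0_pos False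
      by (simp add: large_def exponent)
  qed (simp add: large_def)
  have "(\<integral>\<^sup>+y. ennreal (\<rho> y powr p) \<partial>lborel)
     = (\<integral>\<^sup>+t. ennreal (p * t powr (p - 1)) * emeasure lborel {y. 0 \<le> t \<and> t \<le> \<rho> y} \<partial>lborel)"
    by (rule nn_integral_powr_layer_cake[OF \<rho>_borel \<rho>_nonneg p])
  also have "\<dots> \<le> (\<integral>\<^sup>+t. ennreal (p * t powr (p - 2)) * indicator {0..t0} t
      + ennreal (large t) * indicator {t0..} t \<partial>lborel)"
    unfolding t0_def large_def q_def by (intro nn_integral_mono layer_cake_integrand_le[OF p])
  also have "\<dots> = (\<integral>\<^sup>+t. ennreal (p * t powr (p - 2)) * indicator {0..t0} t \<partial>lborel)
      + (\<integral>\<^sup>+t. ennreal (large t) * indicator {t0..} t \<partial>lborel)"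
    by (intro nn_integral_add) (auto simp: large_def)
  also have "\<dots> = ennreal (Lp_const d p * A powr (real d * (p - 1)))"
    using p p_lt unfolding small_integral large_integral Lp_const_def q_def
    by (subst ennreal_plus[symmetric]) (auto simp: distrib_right)
  finally show ?thesis .
qed

lemma Lp_norm_density_le:
  assumes p: "p > 1" and p_lt: "d = 1 \<or> p < real d / (real d - 1)"
  shows "integrable lborel (\<lambda>x. \<rho> x powr p)"
    and "(\<integral>x. \<rho> x powr p \<partial>lborel) powr (1 / p) \<le> Lp_const d p powr (1 / p) * A powr (real d * (1 - 1 / p))"
proof -
  have bound: "(\<integral>\<^sup>+x. ennreal (\<rho> x powr p) \<partial>lborel) \<le> ennreal (Lp_const d p * A powr (real d * (p - 1)))"
    by (rule nn_integral_powr_density_le[OF p p_lt])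
  have borel: "(\<lambda>x. \<rho> x powr p) \<in> borel_measurable lborel" using \<rho>_borel by measurable
  show "integrable lborel (\<lambda>x. \<rho> x powr p)"
    using bound by (intro integrableI_nonneg[OF borel]) (auto simp: le_less_trans)
  have "(\<integral>x. \<rho> x powr p \<partial>lborel) = enn2real (\<integral>\<^sup>+x. ennreal (\<rho> x powr p) \<partial>lborel)"
    using borel by (intro integral_eq_nn_integral) auto
  also have "\<dots> \<le> enn2real (ennreal (Lp_const d p * A powr (real d * (p - 1))))"
    using bound by (intro enn2real_mono) auto
  also have "\<dots> = Lp_const d p * A powr (real d * (p - 1))"
    using Lp_const_pos[OF p p_lt] by simp
  finally have "(\<integral>x. \<rho> x powr p \<partial>lborel) powr (1 / p) \<le> (Lp_const d p * A powr (real d * (p - 1))) powr (1 / p)"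
    using p by (intro powr_mono2) auto
  also have "\<dots> = Lp_const d p powr (1 / p) * (A powr (real d * (p - 1))) powr (1 / p)"
    using Lp_const_pos[OF p p_lt] by (simp add: powr_mult)
  also have "(A powr (real d * (p - 1))) powr (1 / p) = A powr (real d * (1 - 1 / p))"
    using p by (simp add: powr_powr field_simps)
  finally show "(\<integral>x. \<rho> x powr p \<partial>lborel) powr (1 / p) \<le> Lp_const d p powr (1 / p) * A powr (real d * (1 - 1 / p))" .
qed

end

section \<open>Interval estimate for the law of \<open>f\<close>\<close>

lemma integral_ramp_deriv_le:
  fixes M :: "'a measure" and f :: "'a \<Rightarrow> real" and c e :: "'i \<Rightarrow> real"
  assumes M: "prob_space M" and f: "f \<in> borel_measurable M" and "S \<ge> 0" "r \<ge> 0"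
    and H: "\<And>\<phi>. Cb_inf \<phi> \<Longrightarrow> (\<forall>x. \<bar>\<phi> x\<bar> \<le> 1) \<Longrightarrow>
              S * (\<integral>x. deriv \<phi> (f x) \<partial>M) \<le> C * sup_norm (deriv \<phi>) powr r"
    and I: "finite I" "\<forall>i\<in>I. c i < e i" "disjoint_family_on (\<lambda>i. {c i<..<e i}) I"
    and L: "L = (\<Sum>i\<in>I. e i - c i)" "L > 0"
  shows "S * (\<integral>x. ramp_deriv I c e L (f x) \<partial>M) \<le> max C 0 * (2 / L) powr r"
proof -
  interpret prob_space M by (rule M)
  have le: "\<forall>i\<in>I. c i \<le> e i" using I(2) by (auto simp: less_imp_le)
  have "S * (\<integral>x. smooth_ramp_deriv (real n + 1) I c e L (f x) \<partial>M) \<le> max C 0 * (2 / L) powr r" for n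
  proof -
    have s: "real n + 1 > 0" "real n + 1 \<noteq> 0" by simp_all
    have "S * (\<integral>x. deriv (smooth_ramp (real n + 1) I c e L) (f x) \<partial>M)
        \<le> C * sup_norm (deriv (smooth_ramp (real n + 1) I c e L)) powr r"
      using Cb_inf_smooth_ramp[OF s(2) I(1) le L] abs_smooth_ramp_le_1[OF s(2) le L] by (intro H) auto
    also have "\<dots> \<le> max C 0 * (2 / L) powr r"
      unfolding deriv_smooth_ramp[OF s(2)]
      using sup_norm_smooth_ramp_deriv[OF s(1) I L(2)] \<open>r \<ge> 0\<close>
      by (intro mult_mono powr_mono2) auto
    finally show ?thesis unfolding deriv_smooth_ramp[OF s(2)] .
  qed
  moreover have "(\<lambda>n. \<integral>x. smooth_ramp_deriv (real n + 1) I c e L (f x) \<partial>M)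
      \<longlonglongrightarrow> (\<integral>x. ramp_deriv I c e L (f x) \<partial>M)"
  proof (rule integral_dominated_convergence[where w="\<lambda>x. 2 * card I / L"])
    show "(\<lambda>x. ramp_deriv I c e L (f x)) \<in> borel_measurable M"
      using f ramp_deriv_borel by measurable
    show "(\<lambda>x. smooth_ramp_deriv (real n + 1) I c e L (f x)) \<in> borel_measurable M" for n
      using f smooth_ramp_deriv_borel by measurable
    show "AE x in M. (\<lambda>n. smooth_ramp_deriv (real n + 1) I c e L (f x)) \<longlonglongrightarrow> ramp_deriv I c e L (f x)"
      by (intro AE_I2 smooth_ramp_deriv_tendsto)
    show "AE x in M. norm (smooth_ramp_deriv (real n + 1) I c e L (f x)) \<le> 2 * card I / L" for n
      by (intro AE_I2) (simp only: real_norm_def abs_smooth_ramp_deriv_le[OF L(2)])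
  qed simp
  ultimately show ?thesis
    by (intro LIMSEQ_le_const2[OF tendsto_mult[OF tendsto_const]]) auto
qed

lemma measure_preimage_Union_intervals_le:
  fixes M :: "'a measure" and f :: "'a \<Rightarrow> real" and c e :: "'i \<Rightarrow> real"
  assumes M: "prob_space M" and f: "f \<in> borel_measurable M" and S: "S \<ge> 0" and "r \<ge> 0"
    and H: "\<And>\<phi>. Cb_inf \<phi> \<Longrightarrow> (\<forall>x. \<bar>\<phi> x\<bar> \<le> 1) \<Longrightarrow>
              S * (\<integral>x. deriv \<phi> (f x) \<partial>M) \<le> C * sup_norm (deriv \<phi>) powr r"
    and I: "finite I" "\<forall>i\<in>I. c i < e i" "disjoint_family_on (\<lambda>i. {c i<..<e i}) I"
    and L: "L = (\<Sum>i\<in>I. e i - c i)" "L > 0"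
  shows "S * (2 / L * measure M (f -` (\<Union>i\<in>I. {c i<..<e i}) \<inter> space M)) \<le> max C 0 * (2 / L) powr r"
proof -
  interpret prob_space M by (rule M)
  define U where "U = (\<Union>i\<in>I. {c i<..<e i})"
  have U: "U \<in> sets borel" unfolding U_def by (intro borel_open open_UN) auto
  have "2 / L * measure M (f -` U \<inter> space M) = (\<integral>x. 2 / L * indicator U (f x) \<partial>M)"
    using U f by (simp add: indicator_def[of "f -` U \<inter> space M"] indicator_vimage[symmetric] measure_def)
  also have "\<dots> \<le> (\<integral>x. ramp_deriv I c e L (f x) \<partial>M)"
  proof (rule integral_mono)
    show "integrable M (\<lambda>x. 2 / L * indicator U (f x))"
      using U f by (intro integrable_mult_right integrable_const_bound[where B=1]) (auto simp: indicator_def)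
    show "integrable M (\<lambda>x. ramp_deriv I c e L (f x))"
      using measurable_compose[OF f ramp_deriv_borel] abs_ramp_deriv_le[OF L(2)]
      by (intro integrable_const_bound[where B="2 * card I / L"] AE_I2) auto
    show "2 / L * indicator U (f x) \<le> ramp_deriv I c e L (f x)" for x
      unfolding U_def using ramp_deriv_ge_indicator[OF I(1,2) L(2)] .
  qed
  finally show ?thesis
    unfolding U_def[symmetric]
    using integral_ramp_deriv_le[OF assms] S by (meson mult_left_mono order_trans)
qed

lemma measure_preimage_Union_intervals_le_powr:
  fixes M :: "'a measure" and f :: "'a \<Rightarrow> real" and c e :: "'i \<Rightarrow> real"
  assumes M: "prob_space M" and f: "f \<in> borel_measurable M" and "\<sigma> > 0" and "d \<ge> 1"
    and H: "\<And>\<phi>. Cb_inf \<phi> \<Longrightarrow> (\<forall>x. \<bar>\<phi> x\<bar> \<le> 1) \<Longrightarrow>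
              \<sigma> powr (1 / real d) * (\<integral>x. deriv \<phi> (f x) \<partial>M) \<le> C * sup_norm (deriv \<phi>) powr (1 - 1 / real d)"
    and I: "finite I" "\<forall>i\<in>I. c i < e i" "disjoint_family_on (\<lambda>i. {c i<..<e i}) I"
    and L: "L = (\<Sum>i\<in>I. e i - c i)" "L > 0"
  shows "measure M (f -` (\<Union>i\<in>I. {c i<..<e i}) \<inter> space M) \<le> max C 0 / (2 * \<sigma>) powr (1 / real d) * L powr (1 / real d)"
proof -
  let ?m = "measure M (f -` (\<Union>i\<in>I. {c i<..<e i}) \<inter> space M)"
  have powr_eq: "(2 / L) powr (1 - 1 / real d) = 2 / L * (L / 2) powr (1 / real d)"
  proof -
    have "(2 / L) powr (1 - 1 / real d) = (2 / L) powr 1 / (2 / L) powr (1 / real d)" by (rule powr_diff)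
    also have "\<dots> = 2 / L * (L / 2) powr (1 / real d)" using L(2) by (simp add: powr_divide)
    finally show ?thesis .
  qed
  have "2 / L * (\<sigma> powr (1 / real d) * ?m) = \<sigma> powr (1 / real d) * (2 / L * ?m)"
    by (rule mult.left_commute)
  also have "\<dots> \<le> max C 0 * (2 / L) powr (1 - 1 / real d)"
    by (rule measure_preimage_Union_intervals_le[OF M f _ _ H I L]) (use \<open>d \<ge> 1\<close> in auto)
  also have "\<dots> = 2 / L * (max C 0 * (L / 2) powr (1 / real d))"
    unfolding powr_eq by (rule mult.left_commute)
  finally have "2 / L * (\<sigma> powr (1 / real d) * ?m) \<le> 2 / L * (max C 0 * (L / 2) powr (1 / real d))" .
  then have "\<sigma> powr (1 / real d) * ?m \<le> max C 0 * (L / 2) powr (1 / real d)"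
    by (rule mult_left_le_imp_le) (use L(2) in simp)
  then have "?m \<le> max C 0 * (L / 2) powr (1 / real d) / \<sigma> powr (1 / real d)"
    using \<open>\<sigma> > 0\<close> by (simp add: pos_le_divide_eq mult.commute)
  also have "\<dots> = max C 0 / (2 * \<sigma>) powr (1 / real d) * L powr (1 / real d)"
    using \<open>\<sigma> > 0\<close> L(2) by (simp add: powr_divide powr_mult)
  finally show ?thesis .
qed

lemma interval_concentration_distr:
  fixes M :: "'a measure" and f :: "'a \<Rightarrow> real"
  assumes M: "prob_space M" and f: "f \<in> borel_measurable M" and "\<sigma> > 0" and "d \<ge> 1"
    and H: "\<And>\<phi>. Cb_inf \<phi> \<Longrightarrow> (\<forall>x. \<bar>\<phi> x\<bar> \<le> 1) \<Longrightarrow>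
              \<sigma> powr (1 / real d) * (\<integral>x. deriv \<phi> (f x) \<partial>M) \<le> C * sup_norm (deriv \<phi>) powr (1 - 1 / real d)"
    and \<rho>: "\<rho> \<in> borel_measurable borel" "\<And>x. \<rho> x \<ge> 0" "distr M lborel f = density lborel \<rho>"
  shows "interval_concentration (distr M lborel f) \<rho> (max C 0 / (2 * \<sigma>) powr (1 / real d)) d"
proof (rule interval_concentration.intro)
  have "f \<in> measurable M lborel" using f by simp
  then show "prob_space (distr M lborel f)" by (rule prob_space.prob_space_distr[OF M])
  fix F :: "real set set"
  assume F: "finite F" "disjoint F" "\<forall>K\<in>F. \<exists>a b. a < b \<and> K = {a<..<b}"
  have K: "K = {Inf K<..<Sup K}" "Inf K < Sup K" "measure lborel K = Sup K - Inf K" if "K \<in> F" for K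
    using F(3) that by auto
  have Union_F: "\<Union>F = (\<Union>K\<in>F. {Inf K<..<Sup K})" using K(1) by blast
  have "\<Union>F \<in> sets borel" using F(3) by (auto intro!: borel_open open_Union)
  then have measure_eq: "measure (distr M lborel f) (\<Union>F) = measure M (f -` \<Union>F \<inter> space M)"
    using f by (intro measure_distr) auto
  have length_eq: "(\<Sum>K\<in>F. measure lborel K) = (\<Sum>K\<in>F. Sup K - Inf K)" using K(3) by simp
  show "measure (distr M lborel f) (\<Union>F)
      \<le> max C 0 / (2 * \<sigma>) powr (1 / real d) * (\<Sum>K\<in>F. measure lborel K) powr (1 / real d)"
  proof (cases "F = {}")
    case False
    have "disjoint_family_on (\<lambda>K. {Inf K<..<Sup K}) F"
      using F(2) K(1) by (auto simp: disjoint_family_on_def pairwise_def disjnt_def)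
    moreover have "(\<Sum>K\<in>F. Sup K - Inf K) > 0"
      using F(1) K(2) False by (intro sum_pos) auto
    ultimately show ?thesis
      unfolding measure_eq length_eq unfolding Union_F using F(1) K(2)
      by (intro measure_preimage_Union_intervals_le_powr[OF M f \<open>\<sigma> > 0\<close> \<open>d \<ge> 1\<close> H]) auto
  qed simp
qed (use \<rho> \<open>d \<ge> 1\<close> in auto)

lemma sigma_f_pos:
  fixes M :: "'a measure" and f :: "'a \<Rightarrow> real"
  assumes M: "prob_space M" and f: "f \<in> borel_measurable M" "integrable M (\<lambda>x. (f x)\<^sup>2)"
    and nonconst: "\<not> (\<exists>c. AE x in M. f x = c)"
  shows "sigma_f M f > 0"
proof -
  interpret prob_space M by (rule M)
  define c where "c = (\<integral>y. f y \<partial>M)"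
  have "integrable M f" by (rule square_integrable_imp_integrable[OF f])
  moreover have "(\<lambda>x. (f x - c)\<^sup>2) = (\<lambda>x. (f x)\<^sup>2 - 2 * c * f x + c\<^sup>2)"
    by (auto simp: power2_diff fun_eq_iff algebra_simps)
  ultimately have integrable: "integrable M (\<lambda>x. (f x - c)\<^sup>2)"
    using f(2) by simp
  have "(\<integral>x. (f x - c)\<^sup>2 \<partial>M) \<noteq> 0"
  proof
    assume "(\<integral>x. (f x - c)\<^sup>2 \<partial>M) = 0"
    then have "AE x in M. (f x - c)\<^sup>2 = 0" using integral_nonneg_eq_0_iff_AE[OF integrable] by auto
    then have "AE x in M. f x = c" by eventually_elim simp
    with nonconst show False by blast
  qed
  moreover have "(\<integral>x. (f x - c)\<^sup>2 \<partial>M) \<ge> 0" by (rule integral_nonneg_AE) auto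
  ultimately have "(\<integral>x. (f x - c)\<^sup>2 \<partial>M) > 0" by linarith
  then show ?thesis unfolding sigma_f_def c_def[symmetric] by simp
qed

theorem corollary5p2:
  fixes d :: nat and C :: real and M :: "'a::locally_convex_space measure"
    and f :: "'a \<Rightarrow> real" and \<rho> :: "real \<Rightarrow> real" and p :: real
  assumes d_pos: "d \<ge> 1"
    and hypC: "\<forall>(N::'a measure) g \<phi>. prob_space N \<and> radon_measure N \<and> log_concave N \<and>
                 g \<in> Pd N d \<and> Cb_inf \<phi> \<and> (\<forall>x. \<bar>\<phi> x\<bar> \<le> 1) \<longrightarrow>
                 sigma_f N g powr (1 / real d) * (\<integral>x. deriv \<phi> (g x) \<partial>N)
                   \<le> C * sup_norm (deriv \<phi>) powr (1 - 1 / real d)"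
    and M_prob: "prob_space M" and M_radon: "radon_measure M" and M_lc: "log_concave M"
    and f_Pd: "f \<in> Pd M d"
    and f_nonconst: "\<not> (\<exists>c. AE x in M. f x = c)"
    and \<rho>_meas: "\<rho> \<in> borel_measurable borel" and \<rho>_nonneg: "\<forall>x. \<rho> x \<ge> 0"
    and \<rho>_density: "distr M lborel f = density lborel (\<lambda>x. ennreal (\<rho> x))"
    and p_gt1: "1 < p"
    and p_lt: "d = 1 \<or> p < real d / (real d - 1)"
  shows "integrable lborel (\<lambda>x. \<rho> x powr p) \<and>
         sigma_f M f powr (1 - 1 / p) * (\<integral>x. \<rho> x powr p \<partial>lborel) powr (1 / p)
           \<le> (p / (p - 1) + (if d = 1 then 0 else p / (real d / (real d - 1) - p))) powr (1 / p)
              * C powr (real d * (1 - 1 / p))"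
proof -
  have f: "f \<in> borel_measurable M" "integrable M (\<lambda>x. (f x)\<^sup>2)"
    using f_Pd by (auto simp: Pd_def)
  define \<sigma> where "\<sigma> = sigma_f M f"
  have \<sigma>_pos: "\<sigma> > 0" unfolding \<sigma>_def by (rule sigma_f_pos[OF M_prob f f_nonconst])
  define A where "A = max C 0 / (2 * \<sigma>) powr (1 / real d)"
  interpret interval_concentration "distr M lborel f" \<rho> A d
    unfolding A_def using M_prob f_Pd M_radon M_lc \<rho>_meas \<rho>_nonneg \<rho>_density hypC
    by (intro interval_concentration_distr[OF M_prob f(1) \<sigma>_pos d_pos]) (auto simp: \<sigma>_def)
  have "C > 0" using A_pos \<sigma>_pos by (auto simp: A_def max_def split: if_splits)
  define a where "a = 1 - 1 / p"
  have "a > 0" using p_gt1 by (simp add: a_def)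
  have A_powr: "A powr (real d * a) = C powr (real d * a) / (2 * \<sigma>) powr a"
    using \<open>C > 0\<close> \<sigma>_pos d_pos by (simp add: A_def powr_divide powr_powr)
  have "\<sigma> powr a * (\<integral>x. \<rho> x powr p \<partial>lborel) powr (1 / p)
      \<le> \<sigma> powr a * (Lp_const d p powr (1 / p) * A powr (real d * a))"
    using Lp_norm_density_le(2)[OF p_gt1 p_lt] by (intro mult_left_mono) (auto simp: a_def)
  also have "\<dots> = Lp_const d p powr (1 / p) * C powr (real d * a) / 2 powr a"
    using \<sigma>_pos unfolding A_powr by (simp add: powr_mult)
  also have "\<dots> \<le> Lp_const d p powr (1 / p) * C powr (real d * a) / 1"
    using \<open>a > 0\<close> by (intro divide_left_mono) (auto simp: ge_one_powr_ge_zero)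
  finally show ?thesis
    using Lp_norm_density_le(1)[OF p_gt1 p_lt] by (simp add: \<sigma>_def a_def Lp_const_def)
qed

end
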